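(* Let $R$ be a commutative ring with identity. Then $R$ is almost complemented and roughly reduced if and only if $R$ is roughly complemented.
   Context: $\mathfrak{N}(R)$ is the nilradical, $\mathrm{reg}(R)$ the regular elements, $\mathrm{areg}(R)=\{x: x+\mathfrak{N}(R)\in\mathrm{reg}(R/\mathfrak{N}(R))\}$ (equivalently $xa\in\mathfrak{N}(R)\Rightarrow a\in\mathfrak{N}(R)$). $R$ is almost complemented if $R/\mathfrak{N}(R)$ is complemented, i.e. for each $\bar a$ there is $\bar b$ with $\bar a\bar b=0$ and $\bar a+\bar b$ regular in $R/\mathfrak{N}(R)$. Let $\eta(R)=\bigcup_{s\in\mathrm{areg}(R)}\mathrm{Ann}(s)$; $R$ is roughly reduced if $\eta(R)=\mathfrak{N}(R)$. An element $a$ is roughly complemented if there is $b$ with $ab=0$ and $a+b\in\mathrm{areg}(R)$; $R$ is roughly complemented if every element is. *)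

theory Defs
  imports Main
begin

definition nilradical :: "'a::comm_ring_1 set" where
  "nilradical = {x. \<exists>n::nat. x ^ n = 0}"

definition regular_el :: "'a::comm_ring_1 \<Rightarrow> bool" where
  "regular_el x \<longleftrightarrow> (\<forall>a. x * a = 0 \<longrightarrow> a = 0)"

definition Ann :: "'a::comm_ring_1 \<Rightarrow> 'a set" where
  "Ann s = {a. s * a = 0}"

text \<open>areg(R): x + N(R) is regular in R/N(R), i.e. x a in N(R) implies a in N(R).\<close>
definition areg :: "'a::comm_ring_1 set" where
  "areg = {x. \<forall>a. x * a \<in> nilradical \<longrightarrow> a \<in> nilradical}"

text \<open>R/N(R) complemented, written on representatives: for each a there is b with
  (a+N)(b+N) = 0, i.e. a b in N, and (a+N)+(b+N) regular in R/N, i.e. a+b in areg.\<close>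
definition almost_complemented :: "'a::comm_ring_1 itself \<Rightarrow> bool" where
  "almost_complemented (T::'a itself) \<longleftrightarrow>
     (\<forall>a::'a. \<exists>b. a * b \<in> nilradical \<and> a + b \<in> areg)"

definition eta :: "'a::comm_ring_1 set" where
  "eta = (\<Union>s\<in>areg. Ann s)"

definition roughly_reduced :: "'a::comm_ring_1 itself \<Rightarrow> bool" where
  "roughly_reduced (T::'a itself) \<longleftrightarrow> (eta :: 'a set) = nilradical"

definition roughly_complemented_el :: "'a::comm_ring_1 \<Rightarrow> bool" where
  "roughly_complemented_el a \<longleftrightarrow> (\<exists>b. a * b = 0 \<and> a + b \<in> areg)"

definition roughly_complemented :: "'a::comm_ring_1 itself \<Rightarrow> bool" where
  "roughly_complemented (T::'a itself) \<longleftrightarrow> (\<forall>a::'a. roughly_complemented_el a)"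

end

theory Submission
  imports Defs
begin

text \<open>Modulo the nilradical \<open>N\<close> the ring is reduced. Hence if \<open>a b \<in> N\<close> and \<open>a + b \<in> areg\<close>,
  then \<open>a + s b \<in> areg\<close> for every \<open>s \<in> areg\<close>: multiplying \<open>(a + s b) c \<in> N\<close> by \<open>a\<close> and by \<open>b\<close>
  gives \<open>a\<^sup>2 c, s b\<^sup>2 c \<in> N\<close>, so \<open>a c, b c \<in> N\<close> and thus \<open>c \<in> N\<close>. If \<open>R\<close> is roughly reduced,
  some \<open>s \<in> areg\<close> annihilates the nilpotent \<open>a b\<close>, and \<open>s b\<close> is a genuine complement of \<open>a\<close>.
  Conversely, a genuine complement \<open>b\<close> of a nilpotent \<open>x\<close> lies in areg, since it differs from
  \<open>x + b\<close> by a nilpotent; so \<open>x \<in> Ann b \<subseteq> \<eta>\<close>.\<close>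

lemma zero_in_nilradical [simp]: "0 \<in> nilradical"
  by (auto simp: nilradical_def intro: exI[of _ 1])

lemma nilradical_add:
  fixes x y :: "'a::comm_ring_1"
  assumes "x \<in> nilradical" "y \<in> nilradical"
  shows "x + y \<in> nilradical"
proof -
  obtain m n where m: "x ^ m = 0" and n: "y ^ n = 0"
    using assms by (auto simp: nilradical_def)
  have "x ^ k * y ^ (m + n - k) = 0" for k
  proof (cases "m \<le> k")
    case True
    then have "x ^ k = x ^ m * x ^ (k - m)" by (simp flip: power_add)
    then show ?thesis using m by simp
  next
    case False
    then have "m + n - k = n + (m - k)" by simp
    then have "y ^ (m + n - k) = y ^ n * y ^ (m - k)" by (simp only: power_add)
    then show ?thesis using n by simp
  qed
  then have "(x + y) ^ (m + n) = 0"
    by (simp add: binomial_ring mult.assoc)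
  then show ?thesis by (auto simp: nilradical_def)
qed

lemma nilradical_mult_left:
  fixes x y :: "'a::comm_ring_1"
  assumes "x \<in> nilradical"
  shows "y * x \<in> nilradical"
proof -
  obtain n where "x ^ n = 0" using assms by (auto simp: nilradical_def)
  then have "(y * x) ^ n = 0" by (simp add: power_mult_distrib)
  then show ?thesis by (auto simp: nilradical_def)
qed

lemma nilradical_mult_right:
  fixes x y :: "'a::comm_ring_1"
  assumes "x \<in> nilradical"
  shows "x * y \<in> nilradical"
  using nilradical_mult_left[OF assms, of y] by (simp add: mult.commute)

lemma nilradical_add_iff:
  fixes x y :: "'a::comm_ring_1"
  assumes "x \<in> nilradical"
  shows "x + y \<in> nilradical \<longleftrightarrow> y \<in> nilradical"
proof
  assume "x + y \<in> nilradical"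
  moreover have "- x \<in> nilradical"
    using nilradical_mult_left[OF assms, of "- 1"] by simp
  ultimately show "y \<in> nilradical"
    using nilradical_add by fastforce
qed (use assms nilradical_add in blast)

lemma nilradical_square_mult:
  fixes x c :: "'a::comm_ring_1"
  assumes "x * x * c \<in> nilradical"
  shows "x * c \<in> nilradical"
proof -
  have "(x * c) * (x * c) \<in> nilradical"
    using nilradical_mult_left[OF assms, of c] by (simp add: algebra_simps)
  then obtain m where "(x * c) ^ (2 * m) = 0"
    by (auto simp: nilradical_def power_mult power2_eq_square)
  then show ?thesis by (auto simp: nilradical_def)
qed

lemma areg_mult_nilradical_iff:
  fixes s a :: "'a::comm_ring_1"
  assumes "s \<in> areg"
  shows "s * a \<in> nilradical \<longleftrightarrow> a \<in> nilradical"
  using assms nilradical_mult_left by (auto simp: areg_def)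

lemma areg_add_nilradical_iff:
  fixes x s :: "'a::comm_ring_1"
  assumes "x \<in> nilradical"
  shows "x + s \<in> areg \<longleftrightarrow> s \<in> areg"
proof -
  have "(x + s) * c \<in> nilradical \<longleftrightarrow> s * c \<in> nilradical" for c
    using nilradical_add_iff[OF nilradical_mult_right[OF assms, of c]]
    by (simp add: distrib_right)
  then show ?thesis by (simp add: areg_def)
qed

lemma eta_subset_nilradical: "(eta :: 'a::comm_ring_1 set) \<subseteq> nilradical"
  using areg_mult_nilradical_iff
  by (fastforce simp: eta_def Ann_def)

lemma areg_add_mult_complement:
  fixes a b s :: "'a::comm_ring_1"
  assumes ab: "a * b \<in> nilradical" and complement: "a + b \<in> areg" and s: "s \<in> areg"
  shows "a + s * b \<in> areg"
  unfolding areg_def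
proof (intro CollectI allI impI)
  fix c assume c: "(a + s * b) * c \<in> nilradical"
  have abc: "a * b * c \<in> nilradical" "s * (a * b) * c \<in> nilradical"
    using ab by (auto intro: nilradical_mult_left nilradical_mult_right)
  have "s * (a * b) * c + a * a * c \<in> nilradical"
    using nilradical_mult_left[OF c, of a] by (simp add: algebra_simps)
  then have ac: "a * c \<in> nilradical"
    using abc(2) nilradical_add_iff nilradical_square_mult by blast
  have "a * b * c + s * (b * b * c) \<in> nilradical"
    using nilradical_mult_left[OF c, of b] by (simp add: algebra_simps)
  then have bc: "b * c \<in> nilradical"
    using abc(1) nilradical_add_iff areg_mult_nilradical_iff[OF s] nilradical_square_mult
    by blast
  have "(a + b) * c \<in> nilradical"
    using nilradical_add[OF ac bc] by (simp add: distrib_right)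
  then show "c \<in> nilradical"
    using complement by (simp add: areg_def)
qed

lemma roughly_complemented_el_if_complement_in_eta:
  fixes a b :: "'a::comm_ring_1"
  assumes "a * b \<in> eta" "a + b \<in> areg"
  shows "roughly_complemented_el a"
proof -
  obtain s where s: "s \<in> areg" "s * (a * b) = 0"
    using assms(1) by (auto simp: eta_def Ann_def)
  have "a * (s * b) = 0"
    using s(2) by (simp add: algebra_simps)
  moreover have "a + s * b \<in> areg"
    using areg_add_mult_complement assms eta_subset_nilradical s(1) by blast
  ultimately show ?thesis
    by (auto simp: roughly_complemented_el_def)
qed

lemma nilpotent_roughly_complemented_el_in_eta:
  fixes x :: "'a::comm_ring_1"
  assumes "roughly_complemented_el x" "x \<in> nilradical"
  shows "x \<in> eta"
proof -
  obtain b where "x * b = 0" "x + b \<in> areg"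
    using assms(1) by (auto simp: roughly_complemented_el_def)
  then show ?thesis
    using areg_add_nilradical_iff[OF assms(2)] by (auto simp: eta_def Ann_def mult.commute)
qed

theorem mainTheorem16:
  shows "(almost_complemented TYPE('a::comm_ring_1) \<and> roughly_reduced TYPE('a))
         \<longleftrightarrow> roughly_complemented TYPE('a)"
proof
  assume "almost_complemented TYPE('a) \<and> roughly_reduced TYPE('a)"
  then have "\<exists>b. a * b \<in> eta \<and> a + b \<in> areg" for a :: 'a
    by (simp add: almost_complemented_def roughly_reduced_def)
  then show "roughly_complemented TYPE('a)"
    using roughly_complemented_el_if_complement_in_eta
    by (metis roughly_complemented_def)
next
  assume rc: "roughly_complemented TYPE('a)"
  then have "almost_complemented TYPE('a)"
    unfolding roughly_complemented_def roughly_complemented_el_def almost_complemented_def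
    by (metis zero_in_nilradical)
  moreover have "roughly_reduced TYPE('a)"
    using rc eta_subset_nilradical nilpotent_roughly_complemented_el_in_eta
    by (auto simp: roughly_reduced_def roughly_complemented_def)
  ultimately show "almost_complemented TYPE('a) \<and> roughly_reduced TYPE('a)" ..
qed

end
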